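(* Under the standing assumptions below, for every $\zeta\in V^*$ and every $G\in\partial_B^{sw}S(\zeta)$, the operator $\mathrm{Id}+\alpha^{-1}PGP^*:L^2(\Omega)\to L^2(\Omega)$ is an isomorphism, and the operator norm of its inverse (as an operator on $L^2(\Omega)$) is at most $1$.
   Context: Standing assumptions: $(\Omega,\Sigma,\mu)$ is a complete finite measure space. $V$ is a real separable Hilbert space with $V\hookrightarrow L^2(\Omega)$ continuously, compactly and densely, and $[v]_{a_1}^{a_2}:=\min(a_2,\max(a_1,v))\in V$ for all $v\in V$, $a_1\le0\le a_2$; $V\hookrightarrow L^2(\Omega)\cong L^2(\Omega)^*\hookrightarrow V^*$ is a Gelfand triple. $A\in\mathcal{L}(V,V^* )$ is symmetric, satisfies $\langle Av,v\rangle_V\ge c\|v\|_V^2$ ($c>0$) and $\min(\langle Av,[v]_{a_1}^{a_2}\rangle_V,\langle A[v]_{a_1}^{a_2},v\rangle_V)\ge\langle A[v]_{a_1}^{a_2},[v]_{a_1}^{a_2}\rangle_V$ for all $v\in V$, $a_1\le0\le a_2$. $W$ is a real Hilbert space with $W\hookrightarrow L^2(\Omega)$ continuously and densely, $W\hookrightarrow L^2(\Omega)\cong L^2(\Omega)^*\hookrightarrow W^*$ a Gelfand triple. $L:W\to W^*$ is linear, continuous, bijective with inverse $P:=L^{-1}$, and $P^*\in\mathcal{L}(W^*,W)$ is its adjoint: $\langle w_1^*,Pw_2^*\rangle_W=\langle w_2^*,P^*w_1^*\rangle_W$. $K\subset V$ is nonempty, closed, convex with $v\in K,z\in V\Rightarrow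 v+\max(0,z)\in K$ and $v_1,v_2\in K\Rightarrow\min(v_1,v_2)\in K$. $\alpha>0$. $S:V^*\to V$ is the solution map $z\mapsto w$ of: $w\in K$, $\langle Aw-z,v-w\rangle_V\ge0$ for all $v\in K$ (well defined and Lipschitz). $\partial_B^{sw}S(u):=\{G\in\mathcal{L}(V^*,V):\exists\{u_n\}\subset\mathcal{D}_S,\ u_n\to u\text{ in }V^*,\ S'(u_n)z\rightharpoonup Gz\text{ weakly in }V\ \forall z\in V^*\}$, where $\mathcal{D}_S$ is the set of Gâteaux differentiability points of $S:V^*\to V$. The composition $PGP^*$ acts on $L^2(\Omega)$ via $L^2(\Omega)\subset W^*\xrightarrow{P^*}W\subset L^2(\Omega)\subset V^*\xrightarrow{G}V\subset L^2(\Omega)\subset W^*\xrightarrow{P}W\subset L^2(\Omega)$. *)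

theory Defs
  imports "HOL-Analysis.Analysis"
begin

section \<open>L^2(Omega), represented by square-integrable functions modulo a.e. equality\<close>

definition L2 :: "'a measure \<Rightarrow> ('a \<Rightarrow> real) set" where
  "L2 M = {f. f \<in> borel_measurable M \<and> integrable M (\<lambda>x. (f x)\<^sup>2)}"

definition L2norm :: "'a measure \<Rightarrow> ('a \<Rightarrow> real) \<Rightarrow> real" where
  "L2norm M f = sqrt (LINT x|M. (f x)\<^sup>2)"

definition ae_eq :: "'a measure \<Rightarrow> ('a \<Rightarrow> real) \<Rightarrow> ('a \<Rightarrow> real) \<Rightarrow> bool" where
  "ae_eq M f g \<longleftrightarrow> (AE x in M. f x = g x)"

text \<open>iota maps an element of the Hilbert space to a representative of its L^2 class.\<close>
definition cont_dense_embedding :: "'a measure \<Rightarrow> ('v::real_inner \<Rightarrow> 'a \<Rightarrow> real) \<Rightarrow> bool" where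
  "cont_dense_embedding M \<iota> \<longleftrightarrow>
     (\<forall>v. \<iota> v \<in> L2 M) \<and>
     (\<forall>x y. ae_eq M (\<iota> (x + y)) (\<lambda>t. \<iota> x t + \<iota> y t)) \<and>
     (\<forall>c x. ae_eq M (\<iota> (c *\<^sub>R x)) (\<lambda>t. c * \<iota> x t)) \<and>
     (\<exists>C. \<forall>v. L2norm M (\<iota> v) \<le> C * norm v) \<and>
     (\<forall>v. ae_eq M (\<iota> v) (\<lambda>t. 0) \<longrightarrow> v = 0) \<and>
     (\<forall>f\<in>L2 M. \<forall>e>0. \<exists>v. L2norm M (\<lambda>t. \<iota> v t - f t) < e)"

definition compact_embedding :: "'a measure \<Rightarrow> ('v::real_inner \<Rightarrow> 'a \<Rightarrow> real) \<Rightarrow> bool" where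
  "compact_embedding M \<iota> \<longleftrightarrow>
     (\<forall>x :: nat \<Rightarrow> 'v. (\<exists>B. \<forall>n. norm (x n) \<le> B) \<longrightarrow>
        (\<exists>r f. strict_mono r \<and> f \<in> L2 M \<and>
           (\<lambda>n. L2norm M (\<lambda>t. \<iota> (x (r n)) t - f t)) \<longlonglongrightarrow> 0))"

definition dual_emb :: "'a measure \<Rightarrow> ('v::real_normed_vector \<Rightarrow> 'a \<Rightarrow> real) \<Rightarrow> ('a \<Rightarrow> real) \<Rightarrow> ('v \<Rightarrow>\<^sub>L real)" where
  "dual_emb M \<iota> f = Blinfun (\<lambda>v. LINT x|M. f x * \<iota> v x)"

text \<open>Truncation [v]_{a1}^{a2} as an element of V (the unique element whose L^2 class is the
  pointwise truncation).\<close>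
definition trunc :: "'a measure \<Rightarrow> ('v \<Rightarrow> 'a \<Rightarrow> real) \<Rightarrow> real \<Rightarrow> real \<Rightarrow> 'v \<Rightarrow> 'v" where
  "trunc M \<iota> a1 a2 v = (THE w. ae_eq M (\<iota> w) (\<lambda>x. min a2 (max a1 (\<iota> v x))))"

definition VI_solution :: "('v::real_normed_vector \<Rightarrow>\<^sub>L ('v \<Rightarrow>\<^sub>L real)) \<Rightarrow> 'v set \<Rightarrow> ('v \<Rightarrow>\<^sub>L real) \<Rightarrow> 'v" where
  "VI_solution A K z = (THE w. w \<in> K \<and> (\<forall>v\<in>K. blinfun_apply (A w - z) (v - w) \<ge> 0))"

definition gateaux_deriv :: "('x::real_normed_vector \<Rightarrow> 'y::real_normed_vector) \<Rightarrow> 'x \<Rightarrow> ('x \<Rightarrow>\<^sub>L 'y) \<Rightarrow> bool" where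
  "gateaux_deriv S u D \<longleftrightarrow>
     (\<forall>h. ((\<lambda>t::real. (1 / t) *\<^sub>R (S (u + t *\<^sub>R h) - S u)) \<longlongrightarrow> blinfun_apply D h) (at 0))"

definition gateaux_points :: "('x::real_normed_vector \<Rightarrow> 'y::real_normed_vector) \<Rightarrow> 'x set" where
  "gateaux_points S = {u. \<exists>D. gateaux_deriv S u D}"

definition weak_conv :: "(nat \<Rightarrow> 'v::real_inner) \<Rightarrow> 'v \<Rightarrow> bool" where
  "weak_conv x y \<longleftrightarrow> (\<forall>v. (\<lambda>n. inner (x n) v) \<longlonglongrightarrow> inner y v)"

definition bouligand_sw :: "('x::real_normed_vector \<Rightarrow> 'y::real_inner) \<Rightarrow> 'x \<Rightarrow> ('x \<Rightarrow>\<^sub>L 'y) set" where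
  "bouligand_sw S u = {G. \<exists>un Dn. (\<forall>n. un n \<in> gateaux_points S \<and> gateaux_deriv S (un n) (Dn n)) \<and>
      un \<longlonglongrightarrow> u \<and> (\<forall>z. weak_conv (\<lambda>n. blinfun_apply (Dn n) z) (blinfun_apply G z))}"

end

theory Submission
  imports Defs
begin

text \<open>
  The solution map \<open>S\<close> of the variational inequality is monotone,
  \<open>(z\<^sub>1 - z\<^sub>2)(S z\<^sub>1 - S z\<^sub>2) \<ge> 0\<close>, so every Gateaux derivative of \<open>S\<close>, and by weak
  limits every \<open>G\<close> in the strong-weak Bouligand subdifferential, satisfies \<open>z (G z) \<ge> 0\<close>.
  By the adjointness of \<open>P\<close> and \<open>P\<^sup>*\<close> the operator \<open>\<alpha>\<^sup>-\<^sup>1 P G P\<^sup>*\<close> is then monotone on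
  \<open>L\<^sup>2\<close>, hence \<open>(T f, f) \<ge> \<parallel>f\<parallel>\<^sup>2\<close> for \<open>T = Id + \<alpha>\<^sup>-\<^sup>1 P G P\<^sup>*\<close>, which gives
  \<open>\<parallel>f\<parallel> \<le> \<parallel>T f\<parallel>\<close> and injectivity. Surjectivity follows from the Richardson iteration
  \<open>f \<mapsto> f - \<epsilon> (T f - g)\<close>, a contraction on \<open>L\<^sup>2\<close> for small \<open>\<epsilon>\<close>.
\<close>

section \<open>Variational inequalities\<close>

definition VI_energy :: "('v::real_normed_vector \<Rightarrow>\<^sub>L 'v \<Rightarrow>\<^sub>L real) \<Rightarrow> ('v \<Rightarrow>\<^sub>L real) \<Rightarrow> 'v \<Rightarrow> real" where
  "VI_energy A z w = A w w / 2 - z w"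

lemma VI_energy_bounded_below:
  fixes A :: "'v::real_normed_vector \<Rightarrow>\<^sub>L 'v \<Rightarrow>\<^sub>L real"
  assumes c: "c > 0" and coer: "\<And>v. A v v \<ge> c * (norm v)\<^sup>2"
  shows "VI_energy A z w \<ge> - (norm z)\<^sup>2 / (2 * c)"
proof -
  have "0 \<le> (c * norm w - norm z)\<^sup>2 / (2 * c)" using c by simp
  also have "\<dots> = c / 2 * (norm w)\<^sup>2 - norm z * norm w + (norm z)\<^sup>2 / (2 * c)"
    using c by (simp add: power2_eq_square field_simps)
  also have "c / 2 * (norm w)\<^sup>2 - norm z * norm w \<le> VI_energy A z w"
    unfolding VI_energy_def using coer[of w] norm_blinfun[of z w] by simp
  finally show ?thesis by simp
qed

lemma VI_energy_parallelogram:
  fixes A :: "'v::real_normed_vector \<Rightarrow>\<^sub>L 'v \<Rightarrow>\<^sub>L real"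
  assumes sym: "\<And>x y. A x y = A y x"
  shows "VI_energy A z a + VI_energy A z b - 2 * VI_energy A z ((1/2) *\<^sub>R a + (1/2) *\<^sub>R b)
           = A (a - b) (a - b) / 4"
  unfolding VI_energy_def using sym[of b a] by (simp add: blinfun.bilinear_simps algebra_simps)

lemma VI_energy_minimizing_sequence_Cauchy:
  fixes A :: "'v::real_normed_vector \<Rightarrow>\<^sub>L 'v \<Rightarrow>\<^sub>L real"
  assumes sym: "\<And>x y. A x y = A y x" and c: "c > 0" and coer: "\<And>v. A v v \<ge> c * (norm v)\<^sup>2"
    and K: "convex K" and m_le: "\<And>v. v \<in> K \<Longrightarrow> m \<le> VI_energy A z v"
    and ws: "\<And>n. ws n \<in> K" "\<And>n. VI_energy A z (ws n) < m + inverse (real (Suc n))"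
  shows "Cauchy ws"
proof (rule metric_CauchyI)
  let ?J = "VI_energy A z"
  have close: "c / 4 * (norm (a - b))\<^sup>2 \<le> ?J a + ?J b - 2 * m" if "a \<in> K" "b \<in> K" for a b
  proof -
    have "(1/2) *\<^sub>R a + (1/2) *\<^sub>R b \<in> K" using K that by (auto intro!: convexD)
    thus ?thesis using m_le VI_energy_parallelogram[OF sym, of z a b] coer[of "a - b"] by fastforce
  qed
  fix e :: real assume e: "e > 0"
  obtain N where N: "inverse (real (Suc N)) < c * e\<^sup>2 / 8"
    using reals_Archimedean[of "c * e\<^sup>2 / 8"] c e by auto
  have "dist (ws p) (ws q) < e" if "N \<le> p" "N \<le> q" for p q
  proof -
    have "inverse (real (Suc p)) \<le> inverse (real (Suc N))" "inverse (real (Suc q)) \<le> inverse (real (Suc N))"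
      using that by (simp_all add: field_simps)
    hence "c / 4 * (norm (ws p - ws q))\<^sup>2 < c * e\<^sup>2 / 4"
      using close[OF ws(1) ws(1), of p q] ws(2)[of p] ws(2)[of q] N by linarith
    hence "(norm (ws p - ws q))\<^sup>2 < e\<^sup>2" using c by simp
    thus ?thesis using e by (simp add: dist_norm power_less_imp_less_base)
  qed
  thus "\<exists>N. \<forall>p\<ge>N. \<forall>q\<ge>N. dist (ws p) (ws q) < e" by blast
qed

lemma VI_energy_minimizer_exists:
  fixes A :: "'v::{real_inner,complete_space} \<Rightarrow>\<^sub>L 'v \<Rightarrow>\<^sub>L real"
  assumes sym: "\<And>x y. A x y = A y x" and c: "c > 0" and coer: "\<And>v. A v v \<ge> c * (norm v)\<^sup>2"
    and K: "K \<noteq> {}" "closed K" "convex K"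
  shows "\<exists>w\<in>K. \<forall>v\<in>K. VI_energy A z w \<le> VI_energy A z v"
proof -
  let ?J = "VI_energy A z"
  define m where "m = Inf (?J ` K)"
  have bdd: "bdd_below (?J ` K)"
    using VI_energy_bounded_below[OF c coer] by (auto intro!: bdd_belowI)
  have m_le: "m \<le> ?J v" if "v \<in> K" for v
    unfolding m_def using bdd that by (simp add: cInf_lower)
  have "\<exists>w. w \<in> K \<and> ?J w < m + inverse (real (Suc n))" for n
    using cInf_lessD[of "?J ` K" "m + inverse (real (Suc n))"] K(1) by (auto simp: m_def)
  then obtain ws where ws: "\<And>n. ws n \<in> K" "\<And>n. ?J (ws n) < m + inverse (real (Suc n))"
    by metis
  have "Cauchy ws" by (rule VI_energy_minimizing_sequence_Cauchy[OF sym c coer K(3) m_le ws])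
  then obtain w where lim: "ws \<longlonglongrightarrow> w" using Cauchy_convergent_iff convergent_def by blast
  have "w \<in> K" using closed_sequentially[OF K(2) _ lim] ws(1) by blast
  moreover have "?J w \<le> m"
  proof (rule LIMSEQ_le)
    show "(\<lambda>n. ?J (ws n)) \<longlonglongrightarrow> ?J w" unfolding VI_energy_def by (intro tendsto_intros lim) simp
    show "(\<lambda>n. m + inverse (real (Suc n))) \<longlonglongrightarrow> m"
      using tendsto_add[OF tendsto_const LIMSEQ_inverse_real_of_nat, of m] by simp
  qed (use ws(2) less_imp_le in blast)
  ultimately show ?thesis using m_le by force
qed

lemma nonneg_if_nonneg_on_segment:
  fixes X Y :: real
  assumes "\<And>t. 0 < t \<Longrightarrow> t \<le> 1 \<Longrightarrow> 0 \<le> X + t * Y"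
  shows "0 \<le> X"
proof (rule tendsto_lowerbound)
  show "((\<lambda>t. X + t * Y) \<longlongrightarrow> X) (at_right 0)"
    by (auto intro!: tendsto_eq_intros)
  show "\<forall>\<^sub>F t in at_right 0. 0 \<le> X + t * Y"
    using assms by (auto simp: eventually_at_right_field intro!: exI[of _ 1])
qed simp

lemma VI_energy_minimizer_solves:
  fixes A :: "'v::real_normed_vector \<Rightarrow>\<^sub>L 'v \<Rightarrow>\<^sub>L real"
  assumes sym: "\<And>x y. A x y = A y x"
    and K: "convex K" and w: "w \<in> K" and min: "\<And>v. v \<in> K \<Longrightarrow> VI_energy A z w \<le> VI_energy A z v"
    and v: "v \<in> K"
  shows "blinfun_apply (A w - z) (v - w) \<ge> 0"
proof -
  define X where "X = A w (v - w) - z (v - w)"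
  define Y where "Y = A (v - w) (v - w)"
  have "0 \<le> X + t * (Y / 2)" if t: "0 < t" "t \<le> 1" for t
  proof -
    have "w + t *\<^sub>R (v - w) = (1 - t) *\<^sub>R w + t *\<^sub>R v" by (simp add: algebra_simps)
    also have "\<dots> \<in> K" using K w v t by (auto intro!: convexD)
    finally have "0 \<le> VI_energy A z (w + t *\<^sub>R (v - w)) - VI_energy A z w" using min by simp
    also have "\<dots> = t * (X + t * (Y / 2))"
      unfolding VI_energy_def X_def Y_def using sym[of "v - w" w]
      by (simp add: blinfun.bilinear_simps algebra_simps power2_eq_square) (simp add: field_simps)
    finally show ?thesis using t by (simp add: zero_le_mult_iff)
  qed
  hence "0 \<le> X" by (rule nonneg_if_nonneg_on_segment)
  thus ?thesis unfolding X_def by (simp add: blinfun.bilinear_simps)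
qed

lemma VI_solvable:
  fixes A :: "'v::{real_inner,complete_space} \<Rightarrow>\<^sub>L 'v \<Rightarrow>\<^sub>L real"
  assumes sym: "\<And>x y. A x y = A y x" and c: "c > 0" and coer: "\<And>v. A v v \<ge> c * (norm v)\<^sup>2"
    and K: "K \<noteq> {}" "closed K" "convex K"
  shows "\<exists>w\<in>K. \<forall>v\<in>K. blinfun_apply (A w - z) (v - w) \<ge> 0"
  using VI_energy_minimizer_exists[OF sym c coer K] VI_energy_minimizer_solves[OF sym K(3)] by metis

lemma Riesz_representation:
  fixes z :: "'v::{real_inner,complete_space} \<Rightarrow>\<^sub>L real"
  shows "\<exists>r. \<forall>x. z x = inner x r"
proof -
  define A :: "'v \<Rightarrow>\<^sub>L 'v \<Rightarrow>\<^sub>L real" where "A = Blinfun blinfun_inner_left"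
  have A: "A x y = inner y x" for x y
    unfolding A_def by (simp add: bounded_linear_Blinfun_apply bounded_linear_blinfun_inner_left)
  obtain r where r: "\<And>v. blinfun_apply (A r - z) (v - r) \<ge> 0"
    using VI_solvable[of A 1 UNIV z] by (auto simp: A inner_commute power2_norm_eq_inner)
  have "z x = inner x r" for x
    using r[of "r + x"] r[of "r - x"] by (simp add: blinfun.bilinear_simps A)
  thus ?thesis by blast
qed

lemma VI_solution_solves:
  fixes A :: "'v::{real_inner,complete_space} \<Rightarrow>\<^sub>L 'v \<Rightarrow>\<^sub>L real"
  assumes sym: "\<And>x y. A x y = A y x" and c: "c > 0" and coer: "\<And>v. A v v \<ge> c * (norm v)\<^sup>2"
    and K: "K \<noteq> {}" "closed K" "convex K"
  shows "VI_solution A K z \<in> K"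
    and "\<And>v. v \<in> K \<Longrightarrow> blinfun_apply (A (VI_solution A K z) - z) (v - VI_solution A K z) \<ge> 0"
proof -
  let ?P = "\<lambda>w. w \<in> K \<and> (\<forall>v\<in>K. blinfun_apply (A w - z) (v - w) \<ge> 0)"
  obtain w where w: "?P w" using VI_solvable[OF sym c coer K] by blast
  have unique: "w2 = w1" if "?P w1" "?P w2" for w1 w2
  proof -
    have "blinfun_apply (A w1 - z) (w2 - w1) \<ge> 0" "blinfun_apply (A w2 - z) (w1 - w2) \<ge> 0"
      using that by auto
    hence "A (w1 - w2) (w1 - w2) \<le> 0" by (simp add: blinfun.bilinear_simps algebra_simps)
    hence "c * (norm (w1 - w2))\<^sup>2 \<le> 0" using coer[of "w1 - w2"] by linarith
    thus ?thesis using c by (simp add: mult_le_0_iff)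
  qed
  have "\<exists>!w. ?P w" using w unique by blast
  from theI'[OF this] show "VI_solution A K z \<in> K"
    and "\<And>v. v \<in> K \<Longrightarrow> blinfun_apply (A (VI_solution A K z) - z) (v - VI_solution A K z) \<ge> 0"
    unfolding VI_solution_def by blast+
qed

lemma VI_solution_monotone:
  fixes A :: "'v::{real_inner,complete_space} \<Rightarrow>\<^sub>L 'v \<Rightarrow>\<^sub>L real"
  assumes sym: "\<And>x y. A x y = A y x" and c: "c > 0" and coer: "\<And>v. A v v \<ge> c * (norm v)\<^sup>2"
    and K: "K \<noteq> {}" "closed K" "convex K"
  shows "blinfun_apply (z1 - z2) (VI_solution A K z1 - VI_solution A K z2) \<ge> 0"
proof -
  define w1 w2 where "w1 = VI_solution A K z1" and "w2 = VI_solution A K z2"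
  note S = VI_solution_solves[OF sym c coer K]
  have "0 \<le> blinfun_apply (A w1 - z1) (w2 - w1)" "0 \<le> blinfun_apply (A w2 - z2) (w1 - w2)"
    unfolding w1_def w2_def using S by blast+
  moreover have "0 \<le> A (w1 - w2) (w1 - w2)"
    using coer[of "w1 - w2"] c by (metis mult_nonneg_nonneg order_trans less_imp_le zero_le_power2)
  ultimately show ?thesis unfolding w1_def[symmetric] w2_def[symmetric]
    by (simp add: blinfun.bilinear_simps algebra_simps)
qed

lemma gateaux_deriv_monotone_nonneg:
  fixes S :: "('v::real_normed_vector \<Rightarrow>\<^sub>L real) \<Rightarrow> 'v"
  assumes mono: "\<And>z1 z2. blinfun_apply (z1 - z2) (S z1 - S z2) \<ge> 0"
    and D: "gateaux_deriv S u D"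
  shows "blinfun_apply h (blinfun_apply D h) \<ge> 0"
proof (rule tendsto_lowerbound)
  show "((\<lambda>t. blinfun_apply h ((1 / t) *\<^sub>R (S (u + t *\<^sub>R h) - S u)))
          \<longlongrightarrow> blinfun_apply h (blinfun_apply D h)) (at 0)"
    using D unfolding gateaux_deriv_def by (intro tendsto_intros) blast
  have "0 \<le> blinfun_apply h ((1 / t) *\<^sub>R (S (u + t *\<^sub>R h) - S u))" if t: "t \<noteq> 0" for t
  proof -
    define d where "d = S (u + t *\<^sub>R h) - S u"
    have "0 \<le> blinfun_apply ((u + t *\<^sub>R h) - u) d" unfolding d_def by (rule mono)
    also have "\<dots> = t\<^sup>2 * blinfun_apply h ((1 / t) *\<^sub>R d)"
      using t by (simp add: blinfun.scaleR_left blinfun.scaleR_right power2_eq_square)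
    finally show ?thesis unfolding d_def using t by (simp add: zero_le_mult_iff)
  qed
  thus "\<forall>\<^sub>F t in at 0. 0 \<le> blinfun_apply h ((1 / t) *\<^sub>R (S (u + t *\<^sub>R h) - S u))"
    by (auto simp: eventually_at_filter)
qed simp

lemma bouligand_sw_monotone_nonneg:
  fixes S :: "('v::{real_inner,complete_space} \<Rightarrow>\<^sub>L real) \<Rightarrow> 'v"
  assumes mono: "\<And>z1 z2. blinfun_apply (z1 - z2) (S z1 - S z2) \<ge> 0"
    and G: "G \<in> bouligand_sw S \<zeta>"
  shows "blinfun_apply z (blinfun_apply G z) \<ge> 0"
proof -
  obtain un Dn where D: "\<And>n. gateaux_deriv S (un n) (Dn n)"
    and weak: "\<And>z. weak_conv (\<lambda>n. blinfun_apply (Dn n) z) (blinfun_apply G z)"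
    using G unfolding bouligand_sw_def by blast
  obtain r where r: "\<And>x. z x = inner x r" using Riesz_representation[of z] by blast
  have "(\<lambda>n. inner (blinfun_apply (Dn n) z) r) \<longlonglongrightarrow> inner (blinfun_apply G z) r"
    using weak[of z] unfolding weak_conv_def by blast
  moreover have "inner (blinfun_apply (Dn n) z) r \<ge> 0" for n
    using gateaux_deriv_monotone_nonneg[OF mono D] r by metis
  ultimately have "inner (blinfun_apply G z) r \<ge> 0" by (intro LIMSEQ_le_const) auto
  thus ?thesis using r by simp
qed

section \<open>Square-integrable functions and the dual embedding\<close>

lemma L2_borel_measurable: "f \<in> L2 M \<Longrightarrow> f \<in> borel_measurable M"
  unfolding L2_def by auto

lemma L2_integrable_power2: "f \<in> L2 M \<Longrightarrow> integrable M (\<lambda>x. (f x)\<^sup>2)"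
  unfolding L2_def by auto

lemma L2_integrable_mult:
  assumes f: "f \<in> L2 M" and g: "g \<in> L2 M"
  shows "integrable M (\<lambda>x. f x * g x)"
proof (rule Bochner_Integration.integrable_bound)
  show "integrable M (\<lambda>x. (f x)\<^sup>2 + (g x)\<^sup>2)"
    using f g by (intro Bochner_Integration.integrable_add L2_integrable_power2)
  show "(\<lambda>x. f x * g x) \<in> borel_measurable M"
    using f g by (intro borel_measurable_times L2_borel_measurable)
  have "\<bar>f x * g x\<bar> \<le> (f x)\<^sup>2 + (g x)\<^sup>2" for x
  proof -
    have "2 * \<bar>f x\<bar> * \<bar>g x\<bar> \<le> (f x)\<^sup>2 + (g x)\<^sup>2"
      using sum_squares_bound[of "\<bar>f x\<bar>" "\<bar>g x\<bar>"] by simp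
    moreover have "0 \<le> \<bar>f x\<bar> * \<bar>g x\<bar>" by simp
    ultimately show ?thesis unfolding abs_mult by linarith
  qed
  thus "AE x in M. norm (f x * g x) \<le> norm ((f x)\<^sup>2 + (g x)\<^sup>2)" by simp
qed

lemma L2_add: "f \<in> L2 M \<Longrightarrow> g \<in> L2 M \<Longrightarrow> (\<lambda>x. f x + g x) \<in> L2 M"
proof -
  assume fg: "f \<in> L2 M" "g \<in> L2 M"
  have "(\<lambda>x. (f x + g x)\<^sup>2) = (\<lambda>x. (f x)\<^sup>2 + 2 * (f x * g x) + (g x)\<^sup>2)"
    by (simp add: power2_sum algebra_simps)
  thus ?thesis unfolding L2_def using fg L2_borel_measurable[OF fg(1)] L2_borel_measurable[OF fg(2)]
    by (auto intro!: integrable_add L2_integrable_power2 L2_integrable_mult integrable_mult_right)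
qed

lemma L2_cmult: "f \<in> L2 M \<Longrightarrow> (\<lambda>x. r * f x) \<in> L2 M"
  unfolding L2_def by (auto simp: power_mult_distrib intro!: integrable_mult_right)

lemma L2_diff: "f \<in> L2 M \<Longrightarrow> g \<in> L2 M \<Longrightarrow> (\<lambda>x. f x - g x) \<in> L2 M"
  using L2_add[of f M "\<lambda>x. (-1) * g x"] L2_cmult[of g M "-1"] by simp

lemma L2norm_nonneg: "L2norm M f \<ge> 0"
  unfolding L2norm_def by simp

lemma L2norm_power2: "(L2norm M f)\<^sup>2 = (LINT x|M. (f x)\<^sup>2)"
  unfolding L2norm_def by (simp add: integral_nonneg_AE)

lemma L2norm_cmult: "L2norm M (\<lambda>x. r * f x) = \<bar>r\<bar> * L2norm M f"
  unfolding L2norm_def by (simp add: power_mult_distrib real_sqrt_mult)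

lemma L2norm_eq_0_iff:
  assumes "f \<in> L2 M"
  shows "L2norm M f = 0 \<longleftrightarrow> ae_eq M f (\<lambda>x. 0)"
proof -
  have "L2norm M f = 0 \<longleftrightarrow> (LINT x|M. (f x)\<^sup>2) = 0" unfolding L2norm_def by simp
  also have "\<dots> \<longleftrightarrow> (AE x in M. (f x)\<^sup>2 = 0)"
    by (rule integral_nonneg_eq_0_iff_AE[OF L2_integrable_power2[OF assms]]) simp
  finally show ?thesis unfolding ae_eq_def by simp
qed

lemma L2norm_cong_AE:
  assumes "f \<in> borel_measurable M" "g \<in> borel_measurable M" "ae_eq M f g"
  shows "L2norm M f = L2norm M g"
proof -
  have "AE x in M. (f x)\<^sup>2 = (g x)\<^sup>2" using assms(3) unfolding ae_eq_def by eventually_elim simp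
  hence "(LINT x|M. (f x)\<^sup>2) = (LINT x|M. (g x)\<^sup>2)"
    by (rule integral_cong_AE[rotated 2]) (intro borel_measurable_power assms(1,2))+
  thus ?thesis unfolding L2norm_def by simp
qed

lemma discriminant_le_if_quadratic_nonneg:
  fixes a b c :: real
  assumes nonneg: "\<And>t. 0 \<le> a + 2 * t * b + t\<^sup>2 * c" and c: "c \<ge> 0"
  shows "b\<^sup>2 \<le> a * c"
proof (cases "c = 0")
  case True
  have "b = 0"
  proof (rule ccontr)
    assume "b \<noteq> 0"
    hence "a + 2 * (- (a + 1) / (2 * b)) * b = -1" by (simp add: field_simps)
    thus False using nonneg[of "- (a + 1) / (2 * b)"] True by simp
  qed
  thus ?thesis using True by simp
next
  case False
  hence "a + 2 * (- b / c) * b + (- b / c)\<^sup>2 * c = (a * c - b\<^sup>2) / c"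
    by (simp add: power2_eq_square field_simps)
  thus ?thesis using nonneg[of "- b / c"] c False by (simp add: zero_le_divide_iff)
qed

lemma L2_Cauchy_Schwarz:
  assumes f: "f \<in> L2 M" and g: "g \<in> L2 M"
  shows "\<bar>LINT x|M. f x * g x\<bar> \<le> L2norm M f * L2norm M g"
proof -
  have "(LINT x|M. f x * g x)\<^sup>2 \<le> (LINT x|M. (f x)\<^sup>2) * (LINT x|M. (g x)\<^sup>2)"
  proof (rule discriminant_le_if_quadratic_nonneg)
    fix t :: real
    have "0 \<le> (LINT x|M. (f x + t * g x)\<^sup>2)" by (simp add: integral_nonneg_AE)
    also have "\<dots> = (LINT x|M. (f x)\<^sup>2 + 2 * t * (f x * g x) + t\<^sup>2 * (g x)\<^sup>2)"
      by (simp add: power2_sum power_mult_distrib algebra_simps)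
    also have "\<dots> = (LINT x|M. (f x)\<^sup>2) + 2 * t * (LINT x|M. f x * g x) + t\<^sup>2 * (LINT x|M. (g x)\<^sup>2)"
      using L2_integrable_power2[OF f] L2_integrable_power2[OF g] L2_integrable_mult[OF f g] by simp
    finally show "0 \<le> (LINT x|M. (f x)\<^sup>2) + 2 * t * (LINT x|M. f x * g x) + t\<^sup>2 * (LINT x|M. (g x)\<^sup>2)" .
  qed (simp add: integral_nonneg_AE)
  hence "sqrt ((LINT x|M. f x * g x)\<^sup>2) \<le> sqrt ((LINT x|M. (f x)\<^sup>2) * (LINT x|M. (g x)\<^sup>2))"
    by (rule real_sqrt_le_mono)
  thus ?thesis unfolding L2norm_def by (simp add: real_sqrt_mult)
qed

lemma cont_dense_embedding_L2: "cont_dense_embedding M \<iota> \<Longrightarrow> \<iota> v \<in> L2 M"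
  unfolding cont_dense_embedding_def by (elim conjE) (erule allE)

lemma cont_dense_embedding_add:
  "cont_dense_embedding M \<iota> \<Longrightarrow> ae_eq M (\<iota> (x + y)) (\<lambda>t. \<iota> x t + \<iota> y t)"
  unfolding cont_dense_embedding_def by (elim conjE) (erule allE)+

lemma cont_dense_embedding_scaleR:
  "cont_dense_embedding M \<iota> \<Longrightarrow> ae_eq M (\<iota> (r *\<^sub>R x)) (\<lambda>t. r * \<iota> x t)"
  unfolding cont_dense_embedding_def by (elim conjE) (erule allE)+

lemma cont_dense_embedding_diff:
  assumes \<iota>: "cont_dense_embedding M \<iota>"
  shows "ae_eq M (\<iota> (x - y)) (\<lambda>t. \<iota> x t - \<iota> y t)"
proof -
  have "AE t in M. \<iota> (x + (-1) *\<^sub>R y) t = \<iota> x t + \<iota> ((-1) *\<^sub>R y) t"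
    using cont_dense_embedding_add[OF \<iota>, of x "(-1) *\<^sub>R y"] unfolding ae_eq_def .
  moreover have "AE t in M. \<iota> ((-1) *\<^sub>R y) t = - \<iota> y t"
    using cont_dense_embedding_scaleR[OF \<iota>, of "-1" y] unfolding ae_eq_def by simp
  ultimately show ?thesis unfolding ae_eq_def by eventually_elim simp
qed

lemma cont_dense_embedding_bound:
  assumes "cont_dense_embedding M \<iota>"
  obtains C where "C \<ge> 0" "\<And>v. L2norm M (\<iota> v) \<le> C * norm v"
proof -
  obtain C where C: "\<And>v. L2norm M (\<iota> v) \<le> C * norm v"
    using assms unfolding cont_dense_embedding_def by (elim conjE exE) blast
  have "L2norm M (\<iota> v) \<le> max C 0 * norm v" for v
    using C[of v] mult_right_mono[of C "max C 0" "norm v"] by simp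
  thus ?thesis using that[of "max C 0"] by simp
qed

lemma bounded_linear_dual_emb_integral:
  assumes \<iota>: "cont_dense_embedding M \<iota>" and f: "f \<in> L2 M"
  shows "bounded_linear (\<lambda>v. LINT x|M. f x * \<iota> v x)"
proof -
  obtain C where C: "C \<ge> 0" "\<And>v. L2norm M (\<iota> v) \<le> C * norm v"
    using cont_dense_embedding_bound[OF \<iota>] by blast
  have meas: "f \<in> borel_measurable M" "\<And>v. \<iota> v \<in> borel_measurable M"
    using f cont_dense_embedding_L2[OF \<iota>] by (auto intro: L2_borel_measurable)
  have integrable: "\<And>v. integrable M (\<lambda>x. f x * \<iota> v x)"
    using L2_integrable_mult[OF f cont_dense_embedding_L2[OF \<iota>]] .
  show ?thesis
  proof (rule bounded_linear_intro[where K = "L2norm M f * C"])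
    fix x y
    have "AE t in M. f t * \<iota> (x + y) t = f t * \<iota> x t + f t * \<iota> y t"
      using cont_dense_embedding_add[OF \<iota>, of x y] unfolding ae_eq_def
      by eventually_elim (simp add: algebra_simps)
    hence "(LINT t|M. f t * \<iota> (x + y) t) = (LINT t|M. f t * \<iota> x t + f t * \<iota> y t)"
      by (rule integral_cong_AE[rotated 2]) (intro borel_measurable_times borel_measurable_add meas)+
    thus "(LINT t|M. f t * \<iota> (x + y) t) = (LINT t|M. f t * \<iota> x t) + (LINT t|M. f t * \<iota> y t)"
      using integrable by simp
  next
    fix r x
    have "AE t in M. f t * \<iota> (r *\<^sub>R x) t = r * (f t * \<iota> x t)"
      using cont_dense_embedding_scaleR[OF \<iota>, of r x] unfolding ae_eq_def
      by eventually_elim (simp add: algebra_simps)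
    hence "(LINT t|M. f t * \<iota> (r *\<^sub>R x) t) = (LINT t|M. r * (f t * \<iota> x t))"
      by (rule integral_cong_AE[rotated 2]) (intro borel_measurable_times borel_measurable_const meas)+
    thus "(LINT t|M. f t * \<iota> (r *\<^sub>R x) t) = r *\<^sub>R (LINT t|M. f t * \<iota> x t)" by simp
  next
    fix x
    have "\<bar>LINT t|M. f t * \<iota> x t\<bar> \<le> L2norm M f * L2norm M (\<iota> x)"
      by (rule L2_Cauchy_Schwarz[OF f cont_dense_embedding_L2[OF \<iota>]])
    also have "\<dots> \<le> L2norm M f * (C * norm x)"
      using C(2)[of x] L2norm_nonneg by (intro mult_left_mono)
    finally show "norm (LINT t|M. f t * \<iota> x t) \<le> norm x * (L2norm M f * C)"
      by (simp add: algebra_simps)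
  qed
qed

lemma dual_emb_apply:
  assumes "cont_dense_embedding M \<iota>" and "f \<in> L2 M"
  shows "blinfun_apply (dual_emb M \<iota> f) v = (LINT x|M. f x * \<iota> v x)"
  unfolding dual_emb_def
  using bounded_linear_Blinfun_apply[OF bounded_linear_dual_emb_integral[OF assms]] by simp

lemma norm_dual_emb_le:
  assumes \<iota>: "cont_dense_embedding M \<iota>" and C: "C \<ge> 0" "\<And>v. L2norm M (\<iota> v) \<le> C * norm v"
    and f: "f \<in> L2 M"
  shows "norm (dual_emb M \<iota> f) \<le> C * L2norm M f"
proof (rule norm_blinfun_bound)
  show "0 \<le> C * L2norm M f" using C(1) L2norm_nonneg[of M f] by simp
  fix v
  have "\<bar>LINT t|M. f t * \<iota> v t\<bar> \<le> L2norm M f * L2norm M (\<iota> v)"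
    by (rule L2_Cauchy_Schwarz[OF f cont_dense_embedding_L2[OF \<iota>]])
  also have "\<dots> \<le> L2norm M f * (C * norm v)"
    using C(2)[of v] L2norm_nonneg by (intro mult_left_mono)
  finally show "norm (blinfun_apply (dual_emb M \<iota> f) v) \<le> C * L2norm M f * norm v"
    by (simp add: dual_emb_apply[OF \<iota> f] algebra_simps)
qed

lemma dual_emb_linear:
  assumes \<iota>: "cont_dense_embedding M \<iota>" and f: "f \<in> L2 M" and g: "g \<in> L2 M"
  shows "dual_emb M \<iota> (\<lambda>x. a * f x + b * g x) = a *\<^sub>R dual_emb M \<iota> f + b *\<^sub>R dual_emb M \<iota> g"
proof (rule blinfun_eqI)
  fix v
  have fg: "(\<lambda>x. a * f x + b * g x) \<in> L2 M" using f g by (intro L2_add L2_cmult)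
  have "(LINT x|M. (a * f x + b * g x) * \<iota> v x)
          = a * (LINT x|M. f x * \<iota> v x) + b * (LINT x|M. g x * \<iota> v x)"
    using L2_integrable_mult[OF f cont_dense_embedding_L2[OF \<iota>]]
      L2_integrable_mult[OF g cont_dense_embedding_L2[OF \<iota>]]
    by (simp add: algebra_simps)
  thus "blinfun_apply (dual_emb M \<iota> (\<lambda>x. a * f x + b * g x)) v
          = blinfun_apply (a *\<^sub>R dual_emb M \<iota> f + b *\<^sub>R dual_emb M \<iota> g) v"
    by (simp add: dual_emb_apply[OF \<iota>] f g fg blinfun.bilinear_simps)
qed

lemma dual_emb_diff:
  assumes \<iota>: "cont_dense_embedding M \<iota>" and f: "f \<in> L2 M" and g: "g \<in> L2 M"
  shows "dual_emb M \<iota> (\<lambda>x. f x - g x) = dual_emb M \<iota> f - dual_emb M \<iota> g"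
  using dual_emb_linear[OF \<iota> f g, of 1 "-1"] by simp

lemma dual_emb_cong_AE:
  assumes \<iota>: "cont_dense_embedding M \<iota>" and fg: "f \<in> L2 M" "g \<in> L2 M" and "ae_eq M f g"
  shows "dual_emb M \<iota> f = dual_emb M \<iota> g"
proof (rule blinfun_eqI)
  fix v
  have "AE x in M. f x * \<iota> v x = g x * \<iota> v x"
    using \<open>ae_eq M f g\<close> unfolding ae_eq_def by eventually_elim simp
  hence "(LINT x|M. f x * \<iota> v x) = (LINT x|M. g x * \<iota> v x)"
    by (rule integral_cong_AE[rotated 2])
      (intro borel_measurable_times L2_borel_measurable fg cont_dense_embedding_L2[OF \<iota>])+
  thus "blinfun_apply (dual_emb M \<iota> f) v = blinfun_apply (dual_emb M \<iota> g) v"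
    by (simp add: dual_emb_apply[OF \<iota>] fg)
qed

lemma bounded_linear_dual_emb_comp:
  assumes \<iota>: "cont_dense_embedding M \<iota>" and \<kappa>: "cont_dense_embedding M \<kappa>"
  shows "bounded_linear (\<lambda>y. dual_emb M \<iota> (\<kappa> y))"
proof -
  obtain C1 where C1: "C1 \<ge> 0" "\<And>v. L2norm M (\<iota> v) \<le> C1 * norm v"
    using cont_dense_embedding_bound[OF \<iota>] by blast
  obtain C2 where C2: "C2 \<ge> 0" "\<And>v. L2norm M (\<kappa> v) \<le> C2 * norm v"
    using cont_dense_embedding_bound[OF \<kappa>] by blast
  note \<kappa>L2 = cont_dense_embedding_L2[OF \<kappa>]
  show ?thesis
  proof (rule bounded_linear_intro[where K = "C1 * C2"])
    fix x y
    have "dual_emb M \<iota> (\<kappa> (x + y)) = dual_emb M \<iota> (\<lambda>t. 1 * \<kappa> x t + 1 * \<kappa> y t)"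
      using cont_dense_embedding_add[OF \<kappa>, of x y] \<kappa>L2
      by (intro dual_emb_cong_AE[OF \<iota>]) (auto intro: L2_add)
    thus "dual_emb M \<iota> (\<kappa> (x + y)) = dual_emb M \<iota> (\<kappa> x) + dual_emb M \<iota> (\<kappa> y)"
      using dual_emb_linear[OF \<iota> \<kappa>L2 \<kappa>L2, of 1 x 1 y] by simp
  next
    fix r x
    have "dual_emb M \<iota> (\<kappa> (r *\<^sub>R x)) = dual_emb M \<iota> (\<lambda>t. r * \<kappa> x t + 0 * \<kappa> x t)"
      using cont_dense_embedding_scaleR[OF \<kappa>, of r x] \<kappa>L2
      by (intro dual_emb_cong_AE[OF \<iota>]) (auto intro: L2_cmult)
    thus "dual_emb M \<iota> (\<kappa> (r *\<^sub>R x)) = r *\<^sub>R dual_emb M \<iota> (\<kappa> x)"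
      using dual_emb_linear[OF \<iota> \<kappa>L2 \<kappa>L2, of r x 0 x] by simp
  next
    fix x
    have "norm (dual_emb M \<iota> (\<kappa> x)) \<le> C1 * L2norm M (\<kappa> x)"
      by (rule norm_dual_emb_le[OF \<iota> C1 \<kappa>L2])
    also have "\<dots> \<le> C1 * (C2 * norm x)" using C2(2)[of x] C1(1) by (intro mult_left_mono)
    finally show "norm (dual_emb M \<iota> (\<kappa> x)) \<le> norm x * (C1 * C2)" by (simp add: algebra_simps)
  qed
qed

lemma adjoint_sandwich_nonneg:
  fixes P Pstar :: "('w::real_inner \<Rightarrow>\<^sub>L real) \<Rightarrow>\<^sub>L 'w"
    and G :: "('v::real_inner \<Rightarrow>\<^sub>L real) \<Rightarrow>\<^sub>L 'v"
  assumes \<iota>: "cont_dense_embedding M \<iota>" and \<kappa>: "cont_dense_embedding M \<kappa>"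
    and adjoint: "\<And>\<phi> \<psi>. blinfun_apply \<phi> (P \<psi>) = blinfun_apply \<psi> (Pstar \<phi>)"
    and G_nonneg: "\<And>z. blinfun_apply z (G z) \<ge> 0"
  shows "blinfun_apply \<phi> (P (dual_emb M \<kappa> (\<iota> (G (dual_emb M \<iota> (\<kappa> (Pstar \<phi>))))))) \<ge> 0"
proof -
  define u where "u = G (dual_emb M \<iota> (\<kappa> (Pstar \<phi>)))"
  have "blinfun_apply \<phi> (P (dual_emb M \<kappa> (\<iota> u))) = blinfun_apply (dual_emb M \<kappa> (\<iota> u)) (Pstar \<phi>)"
    by (rule adjoint)
  also have "\<dots> = blinfun_apply (dual_emb M \<iota> (\<kappa> (Pstar \<phi>))) u"
    by (simp add: dual_emb_apply \<iota> \<kappa> cont_dense_embedding_L2 mult.commute)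
  finally show ?thesis using G_nonneg u_def by simp
qed

lemma convergent_if_geometric_steps:
  fixes y :: "nat \<Rightarrow> 'a::banach"
  assumes r: "0 \<le> r" "r < 1" and steps: "\<And>k. norm (y (Suc k) - y k) \<le> Q * r ^ k"
  shows "convergent y"
proof -
  have "summable (\<lambda>k. Q * r ^ k)" using r by (intro summable_mult summable_geometric) simp
  hence "summable (\<lambda>k. y (Suc k) - y k)" using steps by (rule summable_comparison_test')
  hence "convergent (\<lambda>n. \<Sum>k<n. y (Suc k) - y k)" by (simp add: summable_iff_convergent)
  hence "convergent (\<lambda>n. y n - y 0)" by (simp add: sum_lessThan_telescope)
  thus ?thesis using convergent_add_const_iff[of "y 0" "\<lambda>n. y n - y 0"] by simp
qed

lemma convergent_dual_emb_if_geometric_steps: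
  assumes \<kappa>: "cont_dense_embedding M \<kappa>" and fs: "\<And>k. fs k \<in> L2 M" and r: "0 \<le> r" "r < 1"
    and steps: "\<And>k. L2norm M (\<lambda>x. fs (Suc k) x - fs k x) \<le> Q * r ^ k"
  shows "convergent (\<lambda>k. dual_emb M \<kappa> (fs k))"
proof -
  obtain C where C: "C \<ge> 0" "\<And>v. L2norm M (\<kappa> v) \<le> C * norm v"
    using cont_dense_embedding_bound[OF \<kappa>] by blast
  have "norm (dual_emb M \<kappa> (fs (Suc k)) - dual_emb M \<kappa> (fs k)) \<le> (C * Q) * r ^ k" for k
  proof -
    have "norm (dual_emb M \<kappa> (fs (Suc k)) - dual_emb M \<kappa> (fs k))
            \<le> C * L2norm M (\<lambda>x. fs (Suc k) x - fs k x)"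
      unfolding dual_emb_diff[OF \<kappa> fs fs, symmetric] by (intro norm_dual_emb_le[OF \<kappa> C] L2_diff fs)
    thus ?thesis using steps[of k] C(1) by (smt (verit) mult.assoc mult_left_mono)
  qed
  thus ?thesis by (rule convergent_if_geometric_steps[OF r])
qed

section \<open>The identity perturbed by a monotone operator\<close>

locale L2_monotone_perturbation =
  fixes M :: "'a measure" and \<kappa> :: "'w::{real_inner,complete_space} \<Rightarrow> 'a \<Rightarrow> real"
    and N :: "('w \<Rightarrow>\<^sub>L real) \<Rightarrow>\<^sub>L 'w" and a :: real
  assumes embedding: "cont_dense_embedding M \<kappa>" and a_nonneg: "a \<ge> 0"
    and N_nonneg: "\<And>\<phi>. blinfun_apply \<phi> (N \<phi>) \<ge> 0"
begin

definition T :: "('a \<Rightarrow> real) \<Rightarrow> 'a \<Rightarrow> real" where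
  "T f x = f x + a * \<kappa> (N (dual_emb M \<kappa> f)) x"

lemma T_L2: "f \<in> L2 M \<Longrightarrow> T f \<in> L2 M"
  unfolding T_def[abs_def] by (intro L2_add L2_cmult cont_dense_embedding_L2[OF embedding])

lemma power2_le_inner_T:
  assumes f: "f \<in> L2 M"
  shows "(LINT x|M. (f x)\<^sup>2) \<le> (LINT x|M. T f x * f x)"
proof -
  let ?w = "N (dual_emb M \<kappa> f)"
  have "(LINT x|M. T f x * f x) = (LINT x|M. (f x)\<^sup>2) + a * (LINT x|M. f x * \<kappa> ?w x)"
    using L2_integrable_power2[OF f] L2_integrable_mult[OF f cont_dense_embedding_L2[OF embedding]]
    by (simp add: T_def power2_eq_square algebra_simps)
  also have "(LINT x|M. f x * \<kappa> ?w x) = blinfun_apply (dual_emb M \<kappa> f) ?w"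
    by (rule dual_emb_apply[OF embedding f, symmetric])
  finally show ?thesis using N_nonneg a_nonneg by simp
qed

lemma L2norm_le_if_T_AE_eq:
  assumes f: "f \<in> L2 M" and g: "g \<in> L2 M" and Tfg: "ae_eq M (T f) g"
  shows "L2norm M f \<le> L2norm M g"
proof -
  have "AE x in M. T f x * f x = g x * f x" using Tfg unfolding ae_eq_def by eventually_elim simp
  hence "(LINT x|M. T f x * f x) = (LINT x|M. g x * f x)"
    by (rule integral_cong_AE[rotated 2]) (intro borel_measurable_times L2_borel_measurable T_L2 f g)+
  hence "(L2norm M f)\<^sup>2 \<le> L2norm M g * L2norm M f"
    using power2_le_inner_T[OF f] L2_Cauchy_Schwarz[OF g f] L2norm_power2[of M f] by linarith
  thus ?thesis using L2norm_nonneg[of M f] L2norm_nonneg[of M g]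
    by (cases "L2norm M f = 0") (auto simp: power2_eq_square)
qed

lemma T_AE_zero_imp_AE_zero:
  assumes f: "f \<in> L2 M" and Tf: "ae_eq M (T f) (\<lambda>x. 0)"
  shows "ae_eq M f (\<lambda>x. 0)"
proof -
  have "L2norm M f \<le> L2norm M (\<lambda>x. 0)"
    using L2norm_le_if_T_AE_eq[OF f _ Tf] by (simp add: L2_def)
  moreover have "L2norm M (\<lambda>x. 0) = 0" by (simp add: L2norm_def)
  ultimately have "L2norm M f = 0" using L2norm_nonneg[of M f] by linarith
  thus ?thesis using L2norm_eq_0_iff[OF f] by simp
qed

lemma T_diff_AE:
  assumes f: "f \<in> L2 M" and g: "g \<in> L2 M"
  shows "ae_eq M (T (\<lambda>x. f x - g x)) (\<lambda>x. T f x - T g x)"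
proof -
  define u w where "u = N (dual_emb M \<kappa> f)" and "w = N (dual_emb M \<kappa> g)"
  have "T (\<lambda>x. f x - g x) = (\<lambda>x. f x - g x + a * \<kappa> (u - w) x)"
    unfolding T_def[abs_def] u_def w_def by (simp add: dual_emb_diff[OF embedding f g] blinfun.diff_right)
  moreover have "T f = (\<lambda>x. f x + a * \<kappa> u x)" "T g = (\<lambda>x. g x + a * \<kappa> w x)"
    unfolding T_def[abs_def] u_def w_def by simp_all
  moreover have "AE x in M. \<kappa> (u - w) x = \<kappa> u x - \<kappa> w x"
    using cont_dense_embedding_diff[OF embedding] unfolding ae_eq_def .
  ultimately show ?thesis unfolding ae_eq_def
    by (auto elim!: eventually_mono simp: right_diff_distrib)
qed

lemma perturbation_bounded:
  obtains \<beta> where "\<beta> \<ge> 0"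
    "\<And>f. f \<in> L2 M \<Longrightarrow> (LINT x|M. (a * \<kappa> (N (dual_emb M \<kappa> f)) x)\<^sup>2) \<le> \<beta> * (LINT x|M. (f x)\<^sup>2)"
proof -
  obtain C where C: "C \<ge> 0" "\<And>v. L2norm M (\<kappa> v) \<le> C * norm v"
    using cont_dense_embedding_bound[OF embedding] by blast
  define \<beta> where "\<beta> = a * C * norm N * C"
  have "(LINT x|M. (a * \<kappa> (N (dual_emb M \<kappa> f)) x)\<^sup>2) \<le> \<beta>\<^sup>2 * (LINT x|M. (f x)\<^sup>2)"
    if f: "f \<in> L2 M" for f
  proof -
    have "norm (N (dual_emb M \<kappa> f)) \<le> norm N * (C * L2norm M f)"
      using norm_dual_emb_le[OF embedding C f] norm_blinfun[of N "dual_emb M \<kappa> f"]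
      by (meson norm_ge_zero order_trans mult_left_mono)
    hence "L2norm M (\<lambda>x. a * \<kappa> (N (dual_emb M \<kappa> f)) x) \<le> \<beta> * L2norm M f"
      using C a_nonneg unfolding L2norm_cmult \<beta>_def
      by (smt (verit, best) mult.assoc mult_left_mono)
    hence "(L2norm M (\<lambda>x. a * \<kappa> (N (dual_emb M \<kappa> f)) x))\<^sup>2 \<le> (\<beta> * L2norm M f)\<^sup>2"
      using L2norm_nonneg by (intro power_mono) auto
    thus ?thesis by (simp add: L2norm_power2 power_mult_distrib)
  qed
  thus ?thesis using that[of "\<beta>\<^sup>2"] by simp
qed

lemma T_bounded:
  obtains K where "K \<ge> 1" "\<And>f. f \<in> L2 M \<Longrightarrow> (LINT x|M. (T f x)\<^sup>2) \<le> K * (LINT x|M. (f x)\<^sup>2)"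
proof -
  obtain \<beta> where \<beta>: "\<beta> \<ge> 0"
    and perturbation: "\<And>f. f \<in> L2 M \<Longrightarrow>
      (LINT x|M. (a * \<kappa> (N (dual_emb M \<kappa> f)) x)\<^sup>2) \<le> \<beta> * (LINT x|M. (f x)\<^sup>2)"
    using perturbation_bounded by blast
  have "(LINT x|M. (T f x)\<^sup>2) \<le> (2 + 2 * \<beta>) * (LINT x|M. (f x)\<^sup>2)" if f: "f \<in> L2 M" for f
  proof -
    let ?B = "\<lambda>x. a * \<kappa> (N (dual_emb M \<kappa> f)) x"
    have B: "?B \<in> L2 M" by (intro L2_cmult cont_dense_embedding_L2[OF embedding])
    have "(LINT x|M. (T f x)\<^sup>2) \<le> (LINT x|M. 2 * (f x)\<^sup>2 + 2 * (?B x)\<^sup>2)"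
    proof (rule integral_mono)
      show "integrable M (\<lambda>x. (T f x)\<^sup>2)" by (rule L2_integrable_power2[OF T_L2[OF f]])
      show "integrable M (\<lambda>x. 2 * (f x)\<^sup>2 + 2 * (?B x)\<^sup>2)"
        using L2_integrable_power2[OF f] L2_integrable_power2[OF B] by simp
      fix x
      show "(T f x)\<^sup>2 \<le> 2 * (f x)\<^sup>2 + 2 * (?B x)\<^sup>2"
        unfolding T_def using sum_squares_bound[of "f x" "?B x"] by (simp add: power2_sum)
    qed
    also have "\<dots> = 2 * (LINT x|M. (f x)\<^sup>2) + 2 * (LINT x|M. (?B x)\<^sup>2)"
      using L2_integrable_power2[OF f] L2_integrable_power2[OF B] by simp
    also have "\<dots> \<le> (2 + 2 * \<beta>) * (LINT x|M. (f x)\<^sup>2)"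
      using perturbation[OF f] by (simp add: algebra_simps)
    finally show ?thesis .
  qed
  thus ?thesis using that[of "2 + 2 * \<beta>"] \<beta> by simp
qed

lemma richardson_contraction:
  obtains \<epsilon> q where "\<epsilon> > 0" "0 \<le> q" "q < 1"
    "\<And>h. h \<in> L2 M \<Longrightarrow> (LINT x|M. (h x - \<epsilon> * T h x)\<^sup>2) \<le> q * (LINT x|M. (h x)\<^sup>2)"
proof -
  obtain K where K: "K \<ge> 1" and TK: "\<And>f. f \<in> L2 M \<Longrightarrow> (LINT x|M. (T f x)\<^sup>2) \<le> K * (LINT x|M. (f x)\<^sup>2)"
    using T_bounded by blast
  define \<epsilon> where "\<epsilon> = 1 / K"
  have \<epsilon>: "0 < \<epsilon>" "\<epsilon> \<le> 1" "\<epsilon>\<^sup>2 * K = \<epsilon>"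
    using K by (auto simp: \<epsilon>_def power2_eq_square)
  have "(LINT x|M. (h x - \<epsilon> * T h x)\<^sup>2) \<le> (1 - \<epsilon>) * (LINT x|M. (h x)\<^sup>2)" if h: "h \<in> L2 M" for h
  proof -
    define I where "I = (LINT x|M. (h x)\<^sup>2)"
    have "(\<lambda>x. (h x - \<epsilon> * T h x)\<^sup>2) = (\<lambda>x. (h x)\<^sup>2 - 2 * \<epsilon> * (T h x * h x) + \<epsilon>\<^sup>2 * (T h x)\<^sup>2)"
      by (rule ext) (simp add: power2_eq_square algebra_simps)
    hence "(LINT x|M. (h x - \<epsilon> * T h x)\<^sup>2)
            = I - 2 * \<epsilon> * (LINT x|M. T h x * h x) + \<epsilon>\<^sup>2 * (LINT x|M. (T h x)\<^sup>2)"
      using L2_integrable_power2[OF h] L2_integrable_mult[OF T_L2[OF h] h] L2_integrable_power2[OF T_L2[OF h]]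
      by (simp add: I_def)
    moreover have "2 * \<epsilon> * I \<le> 2 * \<epsilon> * (LINT x|M. T h x * h x)"
      using power2_le_inner_T[OF h] \<epsilon>(1) unfolding I_def by (intro mult_left_mono) auto
    moreover have "\<epsilon>\<^sup>2 * (LINT x|M. (T h x)\<^sup>2) \<le> \<epsilon>\<^sup>2 * (K * I)"
      using TK[OF h] unfolding I_def by (intro mult_left_mono) auto
    moreover have "\<epsilon>\<^sup>2 * (K * I) = \<epsilon> * I" using \<epsilon>(3) by (metis mult.assoc)
    ultimately show ?thesis unfolding I_def[symmetric] by (simp add: left_diff_distrib)
  qed
  thus ?thesis using that[of \<epsilon> "1 - \<epsilon>"] \<epsilon> by simp
qed

lemma richardson_step_lipschitz:
  assumes contraction: "\<And>h. h \<in> L2 M \<Longrightarrow> (LINT x|M. (h x - \<epsilon> * T h x)\<^sup>2) \<le> q * (LINT x|M. (h x)\<^sup>2)"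
    and f1: "f1 \<in> L2 M" and f2: "f2 \<in> L2 M"
  shows "L2norm M (\<lambda>x. (f1 x - \<epsilon> * T f1 x) - (f2 x - \<epsilon> * T f2 x)) \<le> sqrt q * L2norm M (\<lambda>x. f1 x - f2 x)"
proof -
  let ?d = "\<lambda>x. f1 x - f2 x"
  have d: "?d \<in> L2 M" using f1 f2 by (rule L2_diff)
  have "ae_eq M (\<lambda>x. (f1 x - \<epsilon> * T f1 x) - (f2 x - \<epsilon> * T f2 x)) (\<lambda>x. ?d x - \<epsilon> * T ?d x)"
    using T_diff_AE[OF f1 f2] unfolding ae_eq_def by eventually_elim (simp add: right_diff_distrib)
  hence "L2norm M (\<lambda>x. (f1 x - \<epsilon> * T f1 x) - (f2 x - \<epsilon> * T f2 x)) = L2norm M (\<lambda>x. ?d x - \<epsilon> * T ?d x)"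
    by (intro L2norm_cong_AE L2_borel_measurable L2_diff L2_cmult T_L2 f1 f2 d)
  also have "\<dots> \<le> sqrt (q * (LINT x|M. (?d x)\<^sup>2))"
    unfolding L2norm_def using contraction[OF d] by simp
  also have "\<dots> = sqrt q * L2norm M ?d" by (simp add: L2norm_def real_sqrt_mult)
  finally show ?thesis .
qed

lemma dual_emb_T:
  assumes f: "f \<in> L2 M"
  shows "dual_emb M \<kappa> (T f) = dual_emb M \<kappa> f + a *\<^sub>R dual_emb M \<kappa> (\<kappa> (N (dual_emb M \<kappa> f)))"
  using dual_emb_linear[OF embedding f cont_dense_embedding_L2[OF embedding], of 1 a]
  by (simp add: T_def[abs_def])

lemma dual_emb_richardson_step:
  assumes f: "f \<in> L2 M" and g: "g \<in> L2 M"
  shows "dual_emb M \<kappa> (\<lambda>x. f x - \<epsilon> * (T f x - g x))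
           = dual_emb M \<kappa> f - \<epsilon> *\<^sub>R
               (dual_emb M \<kappa> f + a *\<^sub>R dual_emb M \<kappa> (\<kappa> (N (dual_emb M \<kappa> f))) - dual_emb M \<kappa> g)"
proof -
  have step: "(\<lambda>x. f x - \<epsilon> * (T f x - g x)) = (\<lambda>x. 1 * f x + (- \<epsilon>) * (T f x - g x))" by simp
  show ?thesis
    unfolding step dual_emb_linear[OF embedding f L2_diff[OF T_L2[OF f] g]]
    by (simp add: dual_emb_diff[OF embedding T_L2[OF f] g] dual_emb_T[OF f] algebra_simps)
qed

lemma T_eq_if_dual_fixed_point:
  assumes g: "g \<in> L2 M" and \<phi>: "\<phi> + a *\<^sub>R dual_emb M \<kappa> (\<kappa> (N \<phi>)) = dual_emb M \<kappa> g"
  shows "T (\<lambda>x. g x - a * \<kappa> (N \<phi>) x) = g"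
proof -
  have e: "(\<lambda>x. g x - a * \<kappa> (N \<phi>) x) = (\<lambda>x. 1 * g x + (- a) * \<kappa> (N \<phi>) x)" by simp
  have "dual_emb M \<kappa> (\<lambda>x. g x - a * \<kappa> (N \<phi>) x) = \<phi>"
    unfolding e dual_emb_linear[OF embedding g cont_dense_embedding_L2[OF embedding]]
    using \<phi> by (simp add: algebra_simps)
  thus ?thesis unfolding T_def[abs_def] by simp
qed


lemma dual_fixed_point_exists:
  assumes g: "g \<in> L2 M"
  shows "\<exists>\<phi>. \<phi> + a *\<^sub>R dual_emb M \<kappa> (\<kappa> (N \<phi>)) = dual_emb M \<kappa> g"
proof -
  obtain \<epsilon> q where \<epsilon>: "\<epsilon> > 0" and q: "0 \<le> q" "q < 1"
    and contraction: "\<And>h. h \<in> L2 M \<Longrightarrow> (LINT x|M. (h x - \<epsilon> * T h x)\<^sup>2) \<le> q * (LINT x|M. (h x)\<^sup>2)"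
    using richardson_contraction by blast
  let ?D = "dual_emb M \<kappa>"
  define F where "F f = (\<lambda>x. f x - \<epsilon> * (T f x - g x))" for f
  define fs where "fs k = (F ^^ k) g" for k
  have fs_Suc: "fs (Suc k) = F (fs k)" for k by (simp add: fs_def)
  have fs_L2: "fs k \<in> L2 M" for k
    by (induction k) (auto simp: fs_def F_def g intro!: L2_diff L2_cmult T_L2)
  define \<delta> where "\<delta> k = L2norm M (\<lambda>x. fs (Suc k) x - fs k x)" for k
  have \<delta>_Suc: "\<delta> (Suc k) \<le> sqrt q * \<delta> k" for k
  proof -
    have "(\<lambda>x. fs (Suc (Suc k)) x - fs (Suc k) x)
            = (\<lambda>x. (fs (Suc k) x - \<epsilon> * T (fs (Suc k)) x) - (fs k x - \<epsilon> * T (fs k) x))"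
      unfolding fs_Suc[of "Suc k"] fs_Suc[of k] by (simp add: F_def algebra_simps)
    thus ?thesis unfolding \<delta>_def using richardson_step_lipschitz[OF contraction fs_L2 fs_L2] by simp
  qed
  have "\<delta> k \<le> \<delta> 0 * sqrt q ^ k" for k
  proof (induction k)
    case (Suc k)
    thus ?case using \<delta>_Suc[of k] q
      by (smt (verit) mult.commute mult.left_commute mult_left_mono power_Suc real_sqrt_ge_zero)
  qed simp
  \<comment> \<open>\<open>L2 M\<close> is not complete here, so the iterates are shown to converge in the dual of \<open>W\<close>.\<close>
  hence "convergent (\<lambda>k. ?D (fs k))"
    using q unfolding \<delta>_def
    by (intro convergent_dual_emb_if_geometric_steps[OF embedding fs_L2, where r = "sqrt q"]) auto
  then obtain \<phi> where lim: "(\<lambda>k. ?D (fs k)) \<longlonglongrightarrow> \<phi>" by (auto simp: convergent_def)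
  let ?G = "\<lambda>\<psi>. \<psi> - \<epsilon> *\<^sub>R (\<psi> + a *\<^sub>R ?D (\<kappa> (N \<psi>)) - ?D g)"
  have "(\<lambda>k. ?G (?D (fs k))) \<longlonglongrightarrow> \<phi>"
    using LIMSEQ_Suc[OF lim] unfolding fs_Suc F_def dual_emb_richardson_step[OF fs_L2 g] .
  moreover have "(\<lambda>k. ?D (\<kappa> (N (?D (fs k))))) \<longlonglongrightarrow> ?D (\<kappa> (N \<phi>))"
    by (rule bounded_linear.tendsto[OF bounded_linear_dual_emb_comp[OF embedding embedding]])
      (intro tendsto_intros lim)
  hence "(\<lambda>k. ?G (?D (fs k))) \<longlonglongrightarrow> ?G \<phi>" by (intro tendsto_intros lim)
  ultimately have "?G \<phi> = \<phi>" by (rule LIMSEQ_unique[rotated])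
  thus ?thesis using \<epsilon> by auto
qed

lemma T_surjective: "g \<in> L2 M \<Longrightarrow> \<exists>f\<in>L2 M. T f = g"
  using dual_fixed_point_exists T_eq_if_dual_fixed_point
  by (metis L2_diff L2_cmult cont_dense_embedding_L2[OF embedding])

end

theorem mainTheorem16:
  fixes M :: "'a measure"
    and \<iota> :: "'v::{real_inner, complete_space} \<Rightarrow> 'a \<Rightarrow> real"
    and \<kappa> :: "'w::{real_inner, complete_space} \<Rightarrow> 'a \<Rightarrow> real"
    and A :: "'v \<Rightarrow>\<^sub>L ('v \<Rightarrow>\<^sub>L real)"
    and L :: "'w \<Rightarrow>\<^sub>L ('w \<Rightarrow>\<^sub>L real)"
    and P Pstar :: "('w \<Rightarrow>\<^sub>L real) \<Rightarrow>\<^sub>L 'w"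
    and K :: "'v set"
    and c \<alpha> :: real
    and \<zeta> :: "'v \<Rightarrow>\<^sub>L real"
    and G :: "('v \<Rightarrow>\<^sub>L real) \<Rightarrow>\<^sub>L 'v"
  assumes M_finite: "finite_measure M"
    and M_complete: "complete_measure M"
    and V_separable: "\<exists>D :: 'v set. countable D \<and> closure D = UNIV"
    and V_emb: "cont_dense_embedding M \<iota>"
    and V_compact: "compact_embedding M \<iota>"
    and V_trunc: "\<And>v a1 a2. a1 \<le> 0 \<Longrightarrow> 0 \<le> a2 \<Longrightarrow>
                    \<exists>w. ae_eq M (\<iota> w) (\<lambda>x. min a2 (max a1 (\<iota> v x)))"
    and A_sym: "\<And>x y. A x y = A y x"
    and c_pos: "c > 0"
    and A_coercive: "\<And>v. A v v \<ge> c * (norm v)\<^sup>2"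
    and A_trunc: "\<And>v a1 a2. a1 \<le> 0 \<Longrightarrow> 0 \<le> a2 \<Longrightarrow>
         min (A v (trunc M \<iota> a1 a2 v)) (A (trunc M \<iota> a1 a2 v) v)
           \<ge> A (trunc M \<iota> a1 a2 v) (trunc M \<iota> a1 a2 v)"
    and W_emb: "cont_dense_embedding M \<kappa>"
    and L_bij: "bij (blinfun_apply L)"
    and P_inv1: "\<And>z. L (P z) = z"
    and P_inv2: "\<And>w. P (L w) = w"
    and Pstar_adj: "\<And>w1 w2 :: 'w \<Rightarrow>\<^sub>L real. blinfun_apply w1 (blinfun_apply P w2) = blinfun_apply w2 (blinfun_apply Pstar w1)"
    and K_nonempty: "K \<noteq> {}"
    and K_closed: "closed K"
    and K_convex: "convex K"
    and K_max: "\<And>v z. v \<in> K \<Longrightarrow> \<exists>w\<in>K. ae_eq M (\<iota> w) (\<lambda>x. \<iota> v x + max 0 (\<iota> z x))"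
    and K_min: "\<And>v1 v2. v1 \<in> K \<Longrightarrow> v2 \<in> K \<Longrightarrow> \<exists>w\<in>K. ae_eq M (\<iota> w) (\<lambda>x. min (\<iota> v1 x) (\<iota> v2 x))"
    and alpha_pos: "\<alpha> > 0"
    and G_in: "G \<in> bouligand_sw (VI_solution A K) \<zeta>"
  defines "T \<equiv> (\<lambda>f x. f x + (1 / \<alpha>) *
              \<kappa> (P (dual_emb M \<kappa> (\<iota> (G (dual_emb M \<iota> (\<kappa> (Pstar (dual_emb M \<kappa> f)))))))) x)"
  shows "(\<forall>f\<in>L2 M. T f \<in> L2 M)
       \<and> (\<forall>g\<in>L2 M. \<exists>f\<in>L2 M. ae_eq M (T f) g)
       \<and> (\<forall>f\<in>L2 M. ae_eq M (T f) (\<lambda>x. 0) \<longrightarrow> ae_eq M f (\<lambda>x. 0))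
       \<and> (\<forall>f\<in>L2 M. \<forall>g\<in>L2 M. ae_eq M (T f) g \<longrightarrow> L2norm M f \<le> L2norm M g)"
proof -
  have "bounded_linear (\<lambda>\<phi>. P (dual_emb M \<kappa> (\<iota> (G (dual_emb M \<iota> (\<kappa> (Pstar \<phi>)))))))"
    by (rule bounded_linear_compose[OF blinfun.bounded_linear_right
          bounded_linear_compose[OF bounded_linear_dual_emb_comp[OF W_emb V_emb]
            bounded_linear_compose[OF blinfun.bounded_linear_right
              bounded_linear_compose[OF bounded_linear_dual_emb_comp[OF V_emb W_emb]
                blinfun.bounded_linear_right]]]])
  then obtain N :: "('w \<Rightarrow>\<^sub>L real) \<Rightarrow>\<^sub>L 'w"
    where N: "\<And>\<phi>. N \<phi> = P (dual_emb M \<kappa> (\<iota> (G (dual_emb M \<iota> (\<kappa> (Pstar \<phi>))))))"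
    by (metis bounded_linear_Blinfun_apply)
  have G_nonneg: "\<And>z. blinfun_apply z (G z) \<ge> 0"
    by (rule bouligand_sw_monotone_nonneg[OF
          VI_solution_monotone[OF A_sym c_pos A_coercive K_nonempty K_closed K_convex] G_in])
  interpret perturbation: L2_monotone_perturbation M \<kappa> N "1 / \<alpha>"
    using W_emb alpha_pos adjoint_sandwich_nonneg[OF V_emb W_emb Pstar_adj G_nonneg]
    by unfold_locales (auto simp: N)
  have "T = perturbation.T" unfolding T_def perturbation.T_def[abs_def] N ..
  moreover have "\<forall>g\<in>L2 M. \<exists>f\<in>L2 M. ae_eq M (perturbation.T f) g"
    using perturbation.T_surjective unfolding ae_eq_def by fastforce
  ultimately show ?thesis
    using perturbation.T_L2 perturbation.T_AE_zero_imp_AE_zero perturbation.L2norm_le_if_T_AE_eq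
    by blast
qed

end
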